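(* In the ALOHA network described below with a fixed transmit probability $p\in(0,1)$, consider the normalized mean local delay $\frac{\widetilde{D}(p)}{\log_2(1+\theta)}$ as a function of the SINR threshold $\theta>0$, and let $\theta_{\mathrm{opt}}$ denote its minimizer. (i) In the noise-limited regime (interference neglected, i.e. $\widetilde{D}(p)=\frac1p\exp(\theta r_0^\alpha WN_0)$), $$\theta_{\mathrm{opt}}=\exp\left(\mathcal{W}\left(\frac{1}{r_0^{\alpha}WN_0}\right)\right)-1,$$ where $\mathcal{W}$ is the Lambert $\mathcal{W}$ function, i.e. $\mathcal{W}(z)e^{\mathcal{W}(z)}=z$. (ii) In the interference-limited regime (noise neglected, $N_0=0$), $$\theta_{\mathrm{opt}}\in\left(b_0^{-1/(\delta+1)}-1,\ b_0^{-1/\delta}\right),\qquad b_0=\lambda c_d r_0^d\delta C(\delta)p(1-p)^{\delta-1}.$$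
   Context: Model: transmitters form a homogeneous Poisson point process $\Phi$ of intensity $\lambda>0$ in $\mathbb{R}^d$; the typical receiver is at the origin and its desired transmitter $x_0\in\Phi$ is at distance $r_0>0$; probabilities are under the Palm distribution at $x_0$. Time is slotted. Path loss $\kappa r^{-\alpha}$ with $\alpha>d$, $\delta=d/\alpha\in(0,1)$. Power fading coefficients $h_{k,x}$ are i.i.d. exponential with mean $1$ over transmitters and slots, independent of everything. Unit power, always backlogged transmitters. Bandwidth $W$, noise power spectral density $N_r$, $N_0=N_r/\kappa$, SINR threshold $\theta>0$. $c_d$ is the volume of the unit ball in $\mathbb{R}^d$, $C(\delta)=\Gamma(1+\delta)\Gamma(1-\delta)=\frac{\pi\delta}{\sin(\pi\delta)}$. ALOHA with transmit probability $p$: each transmitter (including $x_0$) is independently active in each slot with probability $p$; $\Phi_k$ is the active set in slot $k$; $\mathrm{SINR}_k=\frac{h_{k,x_0}r_0^{-\alpha}}{WN_0+\sum_{x\in\Phi\setminus\{x_0\}}h_{k,x}|x|^{-\alpha}\mathbf{1}(x\in\Phi_k)}$; a slot is successful if $x_0$ is active and $\mathrm{SINR}_k>\theta$; the local delay is the number of slots until the first success and $\widetilde{D}(p)$ (depending on $\theta$) is its mean, which equals $\frac1p\exp\left(\frac{p\lambda c_d r_0^d\theta^\delta C(\delta)}{(1-p)^{1-\delta}}+\theta r_0^\alpha WN_0\right)$. The normalization by $\log_2(1+\theta)$ accounts for slot duration proportional to $1/\log_2(1+\theta)$. *)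

theory Defs
  imports "HOL-Analysis.Analysis"
begin

definition lambert_W :: "real \<Rightarrow> real" where
  "lambert_W z = (THE w. w \<ge> -1 \<and> w * exp w = z)"

definition C_delta :: "real \<Rightarrow> real" where
  "C_delta \<delta> = Gamma (1 + \<delta>) * Gamma (1 - \<delta>)"

text \<open>Closed form of the mean local delay of ALOHA with transmit probability p
  and SINR threshold theta, in dimension d with path-loss exponent alpha.
  Parameters: lam (intensity), r0 (link distance), W (bandwidth), N0 (noise).
  c_d is the volume of the unit ball in R^d.\<close>
definition mean_local_delay ::
  "nat \<Rightarrow> real \<Rightarrow> real \<Rightarrow> real \<Rightarrow> real \<Rightarrow> real \<Rightarrow> real \<Rightarrow> real \<Rightarrow> real" where
  "mean_local_delay d \<alpha> lam r0 W N0 p \<theta> =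
     (let \<delta> = real d / \<alpha> in
      (1 / p) * exp (p * lam * unit_ball_vol (real d) * r0 ^ d * \<theta> powr \<delta> * C_delta \<delta>
                       / (1 - p) powr (1 - \<delta>)
                     + \<theta> * r0 powr \<alpha> * W * N0))"

definition normalized_delay ::
  "nat \<Rightarrow> real \<Rightarrow> real \<Rightarrow> real \<Rightarrow> real \<Rightarrow> real \<Rightarrow> real \<Rightarrow> real \<Rightarrow> real" where
  "normalized_delay d \<alpha> lam r0 W N0 p \<theta> =
     mean_local_delay d \<alpha> lam r0 W N0 p \<theta> / log 2 (1 + \<theta>)"

definition is_minimizer :: "real set \<Rightarrow> (real \<Rightarrow> real) \<Rightarrow> real \<Rightarrow> bool" where
  "is_minimizer S f x \<longleftrightarrow> x \<in> S \<and> (\<forall>y\<in>S. f x \<le> f y)"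

end

theory Submission
  imports Defs
begin

text \<open>Dividing by \<open>log 2 (1 + \<theta>)\<close> turns the delay into \<open>(ln 2 / p) exp (g \<theta> - ln (ln (1 + \<theta>)))\<close>,
  where \<open>g\<close> is the exponent of the mean local delay. Since the derivative of \<open>ln (ln (1 + x))\<close> is
  \<open>1 / ((1 + x) ln (1 + x))\<close>, the minimizer is the unique root of \<open>g' x (1 + x) ln (1 + x) = 1\<close>,
  the left-hand side being strictly increasing in both regimes. Without interference
  \<open>g' = a\<close> is constant and the root is \<open>exp (W (1/a)) - 1\<close>. Without noise \<open>g' x = b x powr (\<delta> - 1)\<close>,
  and the bounds \<open>x < (1 + x) ln (1 + x) < x (1 + x)\<close> pin the root between
  \<open>b powr (-1/(\<delta>+1)) - 1\<close> and \<open>b powr (-1/\<delta>)\<close>.\<close>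

lemma strict_min_of_deriv_sign_change:
  fixes H H' :: "real \<Rightarrow> real"
  assumes t: "t > 0"
    and deriv: "\<And>x. x > 0 \<Longrightarrow> (H has_real_derivative H' x) (at x)"
    and neg: "\<And>x. 0 < x \<Longrightarrow> x < t \<Longrightarrow> H' x < 0"
    and pos: "\<And>x. t < x \<Longrightarrow> H' x > 0"
    and y: "y > 0" "y \<noteq> t"
  shows "H t < H y"
proof (cases "y < t")
  case True
  obtain z where z: "y < z" "z < t" "H t - H y = (t - y) * H' z"
    using MVT2[of y t H H'] True deriv y by force
  moreover have "(t - y) * H' z < 0" using neg[of z] z y True by (intro mult_pos_neg) auto
  ultimately show ?thesis by linarith
next
  case False
  with y have "t < y" by simp
  then obtain z where z: "t < z" "z < y" "H y - H t = (y - t) * H' z"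
    using MVT2[of t y H H'] deriv t by force
  moreover have "(y - t) * H' z > 0" using pos[of z] z \<open>t < y\<close> by simp
  ultimately show ?thesis by linarith
qed

lemma is_minimizer_unique:
  assumes "t \<in> S" and "\<And>y. y \<in> S \<Longrightarrow> y \<noteq> t \<Longrightarrow> f t < f y"
  shows "(\<exists>x. is_minimizer S f x) \<and> (\<forall>x. is_minimizer S f x \<longrightarrow> x = t)"
  using assms unfolding is_minimizer_def by (metis less_eq_real_def not_le)

lemma lambert_W_eqI:
  assumes "w \<ge> 0" "w * exp w = z"
  shows "lambert_W z = w"
  unfolding lambert_W_def
proof (rule the_equality)
  show "w \<ge> -1 \<and> w * exp w = z" using assms by simp
  fix v assume v: "v \<ge> -1 \<and> v * exp v = z"
  have "z \<ge> 0" using assms by (metis exp_ge_zero mult_nonneg_nonneg)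
  then have "v \<ge> 0" using v by (metis exp_gt_zero mult_neg_pos not_le)
  have mono: "u * exp u < u' * exp u'" if "0 \<le> u" "u < u'" for u u' :: real
    using that by (intro mult_strict_mono) auto
  show "v = w"
    using mono[of v w] mono[of w v] \<open>v \<ge> 0\<close> assms v by (metis less_irrefl linorder_neqE_linordered_idom)
qed

lemma lambert_W_pos:
  assumes "z > 0"
  shows "lambert_W z > 0" "lambert_W z * exp (lambert_W z) = z"
proof -
  have "\<exists>w. 0 \<le> w \<and> w \<le> z \<and> w * exp w = z"
  proof (rule IVT)
    have "z * 1 \<le> z * exp z" using assms by (intro mult_left_mono) auto
    then show "z \<le> z * exp z" by simp
  qed (use assms in \<open>auto intro!: continuous_intros\<close>)
  then obtain w where w: "0 \<le> w" "w * exp w = z" by blast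
  with assms have "w \<noteq> 0" by auto
  with w lambert_W_eqI show "lambert_W z > 0" "lambert_W z * exp (lambert_W z) = z" by auto
qed

lemma less_one_plus_mult_ln:
  fixes x :: real
  assumes "x > 0"
  shows "x < (1 + x) * ln (1 + x)"
proof -
  have "1 / (1 + x) \<noteq> 1" using assms by simp
  then have "ln (1 / (1 + x)) < 1 / (1 + x) - 1"
    using ln_le_minus_one[of "1 / (1 + x)"] ln_eq_minus_one[of "1 / (1 + x)"] assms
    by (fastforce simp: order.strict_iff_order)
  then have "x / (1 + x) < ln (1 + x)" using assms by (simp add: ln_div field_simps)
  then show ?thesis using assms by (simp add: field_simps)
qed

lemma one_plus_mult_ln_strict_mono:
  "strict_mono_on {0<..} (\<lambda>x::real. (1 + x) * ln (1 + x))"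
  by (rule strict_mono_onI) (auto intro!: mult_strict_mono)

lemma strict_min_minus_ln_ln:
  fixes g g' :: "real \<Rightarrow> real"
  assumes t: "t > 0"
    and deriv: "\<And>x. x > 0 \<Longrightarrow> (g has_real_derivative g' x) (at x)"
    and mono: "strict_mono_on {0<..} (\<lambda>x. g' x * ((1 + x) * ln (1 + x)))"
    and crossing: "g' t * ((1 + t) * ln (1 + t)) = 1"
    and y: "y > 0" "y \<noteq> t"
  shows "g t - ln (ln (1 + t)) < g y - ln (ln (1 + y))"
proof (rule strict_min_of_deriv_sign_change[OF t _ _ _ y])
  let ?H' = "\<lambda>x. g' x - 1 / ((1 + x) * ln (1 + x))"
  have sign: "?H' x = (g' x * ((1 + x) * ln (1 + x)) - 1) / ((1 + x) * ln (1 + x))"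
    if "x > 0" for x
  proof -
    have "(1 + x) * ln (1 + x) > 0" using that by simp
    then show ?thesis by (simp add: field_simps)
  qed
  show "((\<lambda>x. g x - ln (ln (1 + x))) has_real_derivative ?H' x) (at x)" if "x > 0" for x
    using that deriv[OF that] by (auto intro!: derivative_eq_intros simp: field_simps)
  show "?H' x < 0" if "0 < x" "x < t" for x
    using strict_mono_onD[OF mono, of x t] that crossing sign[of x] by (simp add: divide_neg_pos)
  show "?H' x > 0" if "t < x" for x
    using strict_mono_onD[OF mono, of t x] that t crossing sign[of x] by simp
qed

lemma noise_limited_minimizer:
  fixes a c :: real and f :: "real \<Rightarrow> real"
  assumes a: "a > 0" and c: "c > 0"
    and f: "\<And>y. y > 0 \<Longrightarrow> f y = c * exp (a * y - ln (ln (1 + y)))"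
  shows "(\<exists>\<theta>. is_minimizer {0<..} f \<theta>) \<and>
    (\<forall>\<theta>. is_minimizer {0<..} f \<theta> \<longrightarrow> \<theta> = exp (lambert_W (1 / a)) - 1)"
proof (rule is_minimizer_unique)
  define w where "w = lambert_W (1 / a)"
  have w: "w > 0" "w * exp w = 1 / a" using lambert_W_pos[of "1 / a"] a by (simp_all add: w_def)
  define t where "t = exp w - 1"
  show "t \<in> {0<..}" using w t_def by simp
  have crossing: "a * ((1 + t) * ln (1 + t)) = 1" using w a by (simp add: t_def mult.commute)
  have mono: "strict_mono_on {0<..} (\<lambda>x. a * ((1 + x) * ln (1 + x)))"
    using one_plus_mult_ln_strict_mono a by (simp add: strict_mono_on_def)
  fix y assume "y \<in> {0<..}" "y \<noteq> t"
  then have "a * t - ln (ln (1 + t)) < a * y - ln (ln (1 + y))"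
    using strict_min_minus_ln_ln[where g = "\<lambda>x. a * x" and g' = "\<lambda>_. a", OF _ _ mono crossing]
      \<open>t \<in> {0<..}\<close> by (auto intro!: derivative_eq_intros)
  with f \<open>y \<in> {0<..}\<close> \<open>t \<in> {0<..}\<close> c show "f t < f y" by simp
qed

lemma powr_mult_one_plus_ln_bounds:
  fixes x \<delta> :: real
  assumes "x > 0"
  shows "x powr \<delta> < x powr (\<delta> - 1) * ((1 + x) * ln (1 + x))"
    and "x powr (\<delta> - 1) * ((1 + x) * ln (1 + x)) < x powr \<delta> * (1 + x)"
proof -
  have split: "x powr \<delta> = x powr (\<delta> - 1) * x" using assms by (simp add: powr_diff)
  have "x powr (\<delta> - 1) > 0" using assms by simp
  then show "x powr \<delta> < x powr (\<delta> - 1) * ((1 + x) * ln (1 + x))"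
    unfolding split using less_one_plus_mult_ln[OF assms] by simp
  have "(1 + x) * ln (1 + x) < x * (1 + x)" using ln_add_one_self_less_self[OF assms] assms by simp
  with \<open>x powr (\<delta> - 1) > 0\<close> show "x powr (\<delta> - 1) * ((1 + x) * ln (1 + x)) < x powr \<delta> * (1 + x)"
    unfolding split by (simp add: mult.assoc)
qed

lemma powr_mult_one_plus_ln_strict_mono:
  fixes \<delta> :: real
  assumes "\<delta> > 0"
  shows "strict_mono_on {0<..} (\<lambda>x. x powr (\<delta> - 1) * ((1 + x) * ln (1 + x)))"
proof (rule strict_mono_onI)
  let ?\<phi> = "\<lambda>x. x powr (\<delta> - 1) * ((1 + x) * ln (1 + x))"
  have deriv: "(?\<phi> has_real_derivative
      x powr (\<delta> - 2) * (\<delta> * ((1 + x) * ln (1 + x)) + (x - ln (1 + x)))) (at x)"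
    if "x > 0" for x
  proof -
    have "(?\<phi> has_real_derivative (\<delta> - 1) * x powr (\<delta> - 1 - 1) * ((1 + x) * ln (1 + x))
        + x powr (\<delta> - 1) * (ln (1 + x) + 1)) (at x)"
      using that by (auto intro!: derivative_eq_intros)
    moreover have "x powr (\<delta> - 1) = x powr (\<delta> - 2) * x"
      using that by (simp add: powr_diff power2_eq_square)
    ultimately show ?thesis by (simp add: algebra_simps)
  qed
  have deriv_pos: "x powr (\<delta> - 2) * (\<delta> * ((1 + x) * ln (1 + x)) + (x - ln (1 + x))) > 0"
    if "x > 0" for x
    using that assms ln_add_one_self_less_self[OF that] by (simp add: add_pos_pos)
  fix a b :: real assume "a \<in> {0<..}" "b \<in> {0<..}" "a < b"
  then show "?\<phi> a < ?\<phi> b"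
  proof (intro DERIV_pos_imp_increasing_open[OF \<open>a < b\<close>] continuous_at_imp_continuous_on ballI)
    fix x assume "a < x" "x < b"
    then show "\<exists>y. (?\<phi> has_real_derivative y) (at x) \<and> 0 < y"
      using deriv deriv_pos \<open>a \<in> {0<..}\<close> by (meson greaterThan_iff less_trans)
  next
    fix x assume "x \<in> {a..b}"
    then show "isCont ?\<phi> x"
      using deriv[THEN DERIV_isCont] \<open>a \<in> {0<..}\<close> by force
  qed
qed

lemma powr_mult_one_plus_ln_root_bounds:
  fixes b \<delta> :: real
  assumes b: "b > 0" and \<delta>: "\<delta> > 0"
  obtains t where "t > 0" "b * (t powr (\<delta> - 1) * ((1 + t) * ln (1 + t))) = 1"
    "b powr (-1 / (\<delta> + 1)) - 1 < t" "t < b powr (-1 / \<delta>)"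
proof -
  define \<phi> where "\<phi> x = x powr (\<delta> - 1) * ((1 + x) * ln (1 + x))" for x :: real
  have mono: "strict_mono_on {0<..} \<phi>"
    using powr_mult_one_plus_ln_strict_mono[OF \<delta>] by (simp add: \<phi>_def[abs_def])
  have inv_powr: "b powr (-1 / e) = (1 / b) powr (1 / e)" for e
    using b by (simp add: powr_minus_divide powr_divide)
  define M where "M = b powr (-1 / \<delta>)"
  have "M > 0" using b by (simp add: M_def)
  have "M powr \<delta> = 1 / b"
    using b \<delta> by (simp add: M_def inv_powr powr_powr)
  then have \<phi>_M: "1 / b < \<phi> M"
    using powr_mult_one_plus_ln_bounds(1)[OF \<open>M > 0\<close>, of \<delta>] by (simp add: \<phi>_def)
  \<comment> \<open>chosen so that \<open>\<phi> e < e powr \<delta> * (1 + e) \<le> 1 / b\<close>\<close>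
  define e where "e = min 1 ((1 / (2 * b)) powr (1 / \<delta>))"
  have "e > 0" using b by (simp add: e_def)
  have "e powr \<delta> \<le> ((1 / (2 * b)) powr (1 / \<delta>)) powr \<delta>"
    unfolding e_def using \<delta> b by (intro powr_mono2) auto
  also have "\<dots> = 1 / (2 * b)" using \<delta> b by (simp add: powr_powr)
  finally have "e powr \<delta> * (1 + e) \<le> 1 / (2 * b) * 2"
    using b \<open>e > 0\<close> by (intro mult_mono) (auto simp: e_def)
  then have \<phi>_e: "\<phi> e < 1 / b"
    using powr_mult_one_plus_ln_bounds(2)[OF \<open>e > 0\<close>, of \<delta>] b by (simp add: \<phi>_def)
  have "e \<le> M"
    using strict_mono_onD[OF mono, of M e] \<phi>_e \<phi>_M \<open>e > 0\<close> \<open>M > 0\<close> by fastforce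
  have cont: "isCont \<phi> x" if "x > 0" for x
    using that unfolding \<phi>_def by (auto intro!: continuous_intros)
  obtain t where "e \<le> t" "t \<le> M" "\<phi> t = 1 / b"
    using IVT[of \<phi> e "1 / b" M] \<phi>_e \<phi>_M \<open>e \<le> M\<close> \<open>e > 0\<close> cont by force
  then have "t > 0" using \<open>e > 0\<close> by simp
  have "t powr \<delta> < 1 / b"
    using powr_mult_one_plus_ln_bounds(1)[OF \<open>t > 0\<close>, of \<delta>] \<open>\<phi> t = 1 / b\<close> by (simp add: \<phi>_def)
  then have "(t powr \<delta>) powr (1 / \<delta>) < (1 / b) powr (1 / \<delta>)"
    using \<delta> \<open>t > 0\<close> by (intro powr_less_mono2) auto
  then have upper: "t < b powr (-1 / \<delta>)"
    unfolding inv_powr using \<delta> \<open>t > 0\<close> by (simp add: powr_powr)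
  have "t powr \<delta> * (1 + t) \<le> (1 + t) powr \<delta> * (1 + t)"
    using \<open>t > 0\<close> \<delta> by (intro mult_right_mono powr_mono2) auto
  also have "\<dots> = (1 + t) powr (\<delta> + 1)" using \<open>t > 0\<close> by (simp add: powr_add)
  finally have "1 / b < (1 + t) powr (\<delta> + 1)"
    using powr_mult_one_plus_ln_bounds(2)[OF \<open>t > 0\<close>, of \<delta>] \<open>\<phi> t = 1 / b\<close> by (simp add: \<phi>_def)
  then have "(1 / b) powr (1 / (\<delta> + 1)) < ((1 + t) powr (\<delta> + 1)) powr (1 / (\<delta> + 1))"
    using \<delta> b by (intro powr_less_mono2) auto
  then have lower: "b powr (-1 / (\<delta> + 1)) - 1 < t"
    unfolding inv_powr using \<open>t > 0\<close> \<delta> by (simp add: powr_powr)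
  show ?thesis
    using that[OF \<open>t > 0\<close> _ lower upper] \<open>\<phi> t = 1 / b\<close> b by (simp add: \<phi>_def)
qed

lemma interference_limited_minimizer:
  fixes K \<delta> c :: real and f :: "real \<Rightarrow> real"
  assumes K: "K > 0" and \<delta>: "\<delta> > 0" and c: "c > 0"
    and f: "\<And>y. y > 0 \<Longrightarrow> f y = c * exp (K * y powr \<delta> - ln (ln (1 + y)))"
  shows "(\<exists>\<theta>. is_minimizer {0<..} f \<theta>) \<and>
    (\<forall>\<theta>. is_minimizer {0<..} f \<theta> \<longrightarrow>
      (K * \<delta>) powr (-1 / (\<delta> + 1)) - 1 < \<theta> \<and> \<theta> < (K * \<delta>) powr (-1 / \<delta>))"
proof -
  obtain t where t: "t > 0" "K * \<delta> * (t powr (\<delta> - 1) * ((1 + t) * ln (1 + t))) = 1"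
    and bounds: "(K * \<delta>) powr (-1 / (\<delta> + 1)) - 1 < t" "t < (K * \<delta>) powr (-1 / \<delta>)"
    using powr_mult_one_plus_ln_root_bounds[of "K * \<delta>" \<delta>] K \<delta> by auto
  let ?g' = "\<lambda>x. K * \<delta> * x powr (\<delta> - 1)"
  have mono: "strict_mono_on {0<..} (\<lambda>x. ?g' x * ((1 + x) * ln (1 + x)))"
    using powr_mult_one_plus_ln_strict_mono[OF \<delta>] K \<delta>
    by (simp add: strict_mono_on_def mult.assoc)
  have deriv: "((\<lambda>x. K * x powr \<delta>) has_real_derivative ?g' x) (at x)" if "x > 0" for x
    using that by (auto intro!: derivative_eq_intros)
  have "(\<exists>\<theta>. is_minimizer {0<..} f \<theta>) \<and> (\<forall>\<theta>. is_minimizer {0<..} f \<theta> \<longrightarrow> \<theta> = t)"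
  proof (rule is_minimizer_unique)
    show "t \<in> {0<..}" using t by simp
    fix y assume "y \<in> {0<..}" "y \<noteq> t"
    then have "K * t powr \<delta> - ln (ln (1 + t)) < K * y powr \<delta> - ln (ln (1 + y))"
      using strict_min_minus_ln_ln[OF t(1) deriv mono] t by (simp add: mult.assoc)
    with f \<open>y \<in> {0<..}\<close> t c show "f t < f y" by simp
  qed
  with bounds show ?thesis by blast
qed

lemma normalized_delay_eq_exp:
  assumes "p > 0" "\<theta> > 0"
  shows "normalized_delay d \<alpha> lam r0 W N0 p \<theta> = (ln 2 / p) *
    exp (p * lam * unit_ball_vol (real d) * r0 ^ d * C_delta (real d / \<alpha>)
           / (1 - p) powr (1 - real d / \<alpha>) * \<theta> powr (real d / \<alpha>)
         + r0 powr \<alpha> * W * N0 * \<theta> - ln (ln (1 + \<theta>)))"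
proof -
  have "ln (1 + \<theta>) > 0" using assms by simp
  then show ?thesis
    unfolding normalized_delay_def mean_local_delay_def Let_def
    using assms by (simp add: exp_diff log_def field_simps)
qed

theorem theorem8:
  fixes d :: nat and \<alpha> lam r0 W N0 p :: real
  assumes d_pos: "d \<ge> 1" and alpha: "\<alpha> > real d"
    and lam: "lam > 0" and r0: "r0 > 0" and W: "W > 0" and N0: "N0 > 0"
    and p: "0 < p" "p < 1"
  shows
    "((\<exists>\<theta>. is_minimizer {0<..} (normalized_delay d \<alpha> 0 r0 W N0 p) \<theta>) \<and>
      (\<forall>\<theta>. is_minimizer {0<..} (normalized_delay d \<alpha> 0 r0 W N0 p) \<theta> \<longrightarrow>
         \<theta> = exp (lambert_W (1 / (r0 powr \<alpha> * W * N0))) - 1)) \<and>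
     ((\<exists>\<theta>. is_minimizer {0<..} (normalized_delay d \<alpha> lam r0 W 0 p) \<theta>) \<and>
      (\<forall>\<theta>. is_minimizer {0<..} (normalized_delay d \<alpha> lam r0 W 0 p) \<theta> \<longrightarrow>
         (let \<delta> = real d / \<alpha>;
              b0 = lam * unit_ball_vol (real d) * r0 ^ d * \<delta> * C_delta \<delta> * p * (1 - p) powr (\<delta> - 1)
          in b0 powr (-1 / (\<delta> + 1)) - 1 < \<theta> \<and> \<theta> < b0 powr (-1 / \<delta>))))"
proof -
  define \<delta> where "\<delta> = real d / \<alpha>"
  have \<delta>: "0 < \<delta>" "\<delta> < 1" using d_pos alpha by (auto simp: \<delta>_def field_simps)
  have c: "ln 2 / p > 0" using p by simp
  define a where "a = r0 powr \<alpha> * W * N0"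
  have "a > 0" using r0 W N0 by (simp add: a_def)
  have noise: "normalized_delay d \<alpha> 0 r0 W N0 p y = (ln 2 / p) * exp (a * y - ln (ln (1 + y)))"
    if "y > 0" for y
    using normalized_delay_eq_exp[OF p(1) that] by (simp add: a_def)
  define K where "K = p * lam * unit_ball_vol (real d) * r0 ^ d * C_delta \<delta> / (1 - p) powr (1 - \<delta>)"
  have "C_delta \<delta> > 0" using \<delta> by (simp add: C_delta_def Gamma_real_pos)
  then have "K > 0" using p lam r0 by (simp add: K_def)
  have interference:
    "normalized_delay d \<alpha> lam r0 W 0 p y = (ln 2 / p) * exp (K * y powr \<delta> - ln (ln (1 + y)))"
    if "y > 0" for y
    using normalized_delay_eq_exp[OF p(1) that] by (simp add: K_def \<delta>_def)
  have b0: "K * \<delta> = lam * unit_ball_vol (real d) * r0 ^ d * \<delta> * C_delta \<delta> * p * (1 - p) powr (\<delta> - 1)"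
  proof -
    have "(1 - p) powr (\<delta> - 1) = 1 / (1 - p) powr (1 - \<delta>)"
      using p by (simp add: powr_minus_divide[symmetric])
    then show ?thesis by (simp add: K_def)
  qed
  show ?thesis
    using noise_limited_minimizer[OF \<open>a > 0\<close> c noise]
      interference_limited_minimizer[OF \<open>K > 0\<close> \<delta>(1) c interference]
    unfolding a_def b0 Let_def \<delta>_def[symmetric] by simp
qed

end
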